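(* Let $G$ be a countable discrete group acting by homeomorphisms on a compact Hausdorff space $X$, and suppose that for every $a\in C(X)\rtimes_\lambda G$ with $\mathbb{E}(a)=0$ we have $0\in\overline{\{\mu a:\mu\in P_f(G,C(X))\}}$. Then for any $a_1,\dots,a_n\in C(X)\rtimes_\lambda G$ with $\mathbb{E}(a_i)=0$ for all $i$ and any $\varepsilon>0$, there is $\mu\in P(G,C(X))$ with $\|\mu a_i\|<\varepsilon$ for all $i=1,\dots,n$.
   Context: $(g\cdot f)(x)=f(g^{-1}x)$. $C(X)\rtimes_\lambda G$ is the reduced crossed product with canonical unitaries $\lambda_t$, $\lambda_tf\lambda_t^*=t\cdot f$; $G$ acts on it by $t\cdot a=\lambda_ta\lambda_t^*$; $\mathbb{E}(f\lambda_t)=f$ if $t=e$, $0$ otherwise. A generalized $(G,C(X))$-probability measure is a formal sum $\mu=\sum_{i\in I}f_is_if_i$ with $I$ an index set, $s_i\in G$ (repetitions allowed), $f_i\in C(X)$, $f_i\ge0$, $f_i\ne0$, $\sum_if_i^2=1$; $P(G,C(X))$ is the set of these and $P_f(G,C(X))$ those with $I$ finite; $\mu a=\sum_if_i(s_i\cdot a)f_i$. Products of generalized measures are composed so that $(\mu_1\mu_2)a=\mu_1(\mu_2a)$. *)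

theory Defs
  imports "HOL-Analysis.Analysis" "HOL-Algebra.Group"
begin

text \<open>An element a is represented by its Fourier coefficients
a s = E(a \<lambda>_s^*) \<in> C(X), i.e. a = \<Sum>_s (a s) \<lambda>_s.
The norm is the norm in the faithful representation \<oplus>_{x\<in>X} \<pi>_x on
\<oplus>_x l2(G), where (\<pi>_x(f)\<xi>)(r) = f(r.x)\<xi>(r) and (\<pi>_x(\<lambda>_t)\<xi>)(r) = \<xi>(t^-1 r);
it is computed as a supremum over finitely supported unit vectors \<xi>
and finite sets R of coordinates.\<close>

definition cp_norm :: "('g, 'm) monoid_scheme \<Rightarrow> ('g \<Rightarrow> 'x \<Rightarrow> 'x) \<Rightarrow> ('g \<Rightarrow> 'x \<Rightarrow> complex) \<Rightarrow> real" where
  "cp_norm G act a = Sup {sqrt (\<Sum>r\<in>R. (cmod (\<Sum>t\<in>F. \<xi> t * a (r \<otimes>\<^bsub>G\<^esub> inv\<^bsub>G\<^esub> t) (act r x)))\<^sup>2)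
      | x F \<xi> R. finite F \<and> F \<subseteq> carrier G \<and> (\<Sum>t\<in>F. (cmod (\<xi> t))\<^sup>2) \<le> 1
                  \<and> finite R \<and> R \<subseteq> carrier G}"

definition cp_fin :: "('g, 'm) monoid_scheme \<Rightarrow> ('g \<Rightarrow> 'x::topological_space \<Rightarrow> complex) \<Rightarrow> bool" where
  "cp_fin G a \<longleftrightarrow> finite {s. a s \<noteq> (\<lambda>_. 0)} \<and> (\<forall>s. continuous_on UNIV (a s))
                 \<and> (\<forall>s. s \<notin> carrier G \<longrightarrow> a s = (\<lambda>_. 0))"

definition crossed_product :: "('g, 'm) monoid_scheme \<Rightarrow> ('g \<Rightarrow> 'x::topological_space \<Rightarrow> 'x)
    \<Rightarrow> ('g \<Rightarrow> 'x \<Rightarrow> complex) set" where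
  "crossed_product G act = {a. (\<forall>s. s \<notin> carrier G \<longrightarrow> a s = (\<lambda>_. 0)) \<and>
      (\<exists>b. (\<forall>n. cp_fin G (b n)) \<and> (\<lambda>n. cp_norm G act (\<lambda>s y. a s y - b n s y)) \<longlonglongrightarrow> 0)}"

definition cp_E :: "('g, 'm) monoid_scheme \<Rightarrow> ('g \<Rightarrow> 'x \<Rightarrow> complex) \<Rightarrow> ('g \<Rightarrow> 'x \<Rightarrow> complex)" where
  "cp_E G a = (\<lambda>s. if s = \<one>\<^bsub>G\<^esub> then a \<one>\<^bsub>G\<^esub> else (\<lambda>_. 0))"

text \<open>Generalized (G,C(X))-probability measure \<Sum>_{i\<in>I} f_i s_i f_i.\<close>
definition gen_prob :: "('g, 'm) monoid_scheme \<Rightarrow> 'i set \<Rightarrow> ('i \<Rightarrow> 'g) \<Rightarrow> ('i \<Rightarrow> 'x::topological_space \<Rightarrow> real) \<Rightarrow> bool" where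
  "gen_prob G I s f \<longleftrightarrow>
     (\<forall>i\<in>I. s i \<in> carrier G \<and> continuous_on UNIV (f i) \<and> (\<forall>x. f i x \<ge> 0) \<and> f i \<noteq> (\<lambda>_. 0))
     \<and> (\<forall>x. ((\<lambda>i. (f i x)\<^sup>2) has_sum 1) I)"

definition gen_prob_fin :: "('g, 'm) monoid_scheme \<Rightarrow> 'i set \<Rightarrow> ('i \<Rightarrow> 'g) \<Rightarrow> ('i \<Rightarrow> 'x::topological_space \<Rightarrow> real) \<Rightarrow> bool" where
  "gen_prob_fin G I s f \<longleftrightarrow> gen_prob G I s f \<and> finite I"

text \<open>\<mu> a = \<Sum>_i f_i (s_i . a) f_i, where s.a = \<lambda>_s a \<lambda>_s^*, computed coefficientwise:
(\<mu> a)_u (x) = \<Sum>_i f_i(x) a_{s_i^-1 u s_i}(s_i^-1 x) f_i(u^-1 x), using (s.f)(x) = f(s^-1 x).\<close>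
definition gen_apply :: "('g, 'm) monoid_scheme \<Rightarrow> ('g \<Rightarrow> 'x \<Rightarrow> 'x) \<Rightarrow> 'i set \<Rightarrow> ('i \<Rightarrow> 'g) \<Rightarrow> ('i \<Rightarrow> 'x \<Rightarrow> real)
    \<Rightarrow> ('g \<Rightarrow> 'x \<Rightarrow> complex) \<Rightarrow> ('g \<Rightarrow> 'x \<Rightarrow> complex)" where
  "gen_apply G act I s f a = (\<lambda>u x. if u \<in> carrier G then
      infsum (\<lambda>i. complex_of_real (f i x)
                 * a (inv\<^bsub>G\<^esub> (s i) \<otimes>\<^bsub>G\<^esub> u \<otimes>\<^bsub>G\<^esub> s i) (act (inv\<^bsub>G\<^esub> (s i)) x)
                 * complex_of_real (f i (act (inv\<^bsub>G\<^esub> u) x))) I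
    else 0)"

end

theory Submission
  imports Defs
begin

text \<open>Elements of the crossed product are treated through the regular representations pi_x,
tested against finitely supported vectors: a norm bound B for a is a bound on all these tests,
so that cp_norm a \<le> B. Each \<mu> in P(G, C(X)) is a contraction for norm bounds, by
Cauchy--Schwarz and sum_i f_i^2 = 1. Finite generalized measures compose, and \<mu> maps the
crossed product into itself and preserves E(a) = 0. Hence, for a_1, ..., a_n, one first
chooses \<mu>_1 with \<mu>_1 a_1 small, then \<mu>_2 with \<mu>_2 (\<mu>_1 a_2) small, and so on; the composite
\<mu>_n ... \<mu>_1 makes every \<mu> a_i small, since the later factors do not increase norms.

The norm is a supremum of reals, so for an element without a norm bound it is the junk value
Sup UNIV, which may happen to be 0. To handle such elements, the final measure is the mixture
\<delta> id + (1 - \<delta>) \<mu>: if a has no norm bound, at most one \<delta> in (0,1) gives (1 - \<delta>) \<mu> a + \<delta> a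
a norm bound, since two such values would express a as a linear combination of bounded
elements.\<close>

lemma eq_lincomb_of_mixtures:
  fixes d1 d2 m a :: "'a::field" assumes "d1 \<noteq> d2"
  shows "a = (1 - d2) / (d1 - d2) * ((1 - d1) * m + d1 * a) + (d1 - 1) / (d1 - d2) * ((1 - d2) * m + d2 * a)"
proof -
  have "(1 - d2) * ((1 - d1) * m + d1 * a) + (d1 - 1) * ((1 - d2) * m + d2 * a) = (d1 - d2) * a"
    by (simp add: algebra_simps)
  then show ?thesis using assms by (simp add: add_divide_distrib[symmetric] field_simps)
qed

locale homeomorphic_action = group G for G :: "'g monoid" (structure) +
  fixes act :: "'g \<Rightarrow> 'x::topological_space \<Rightarrow> 'x"
  assumes act_one: "act \<one> = id"
    and act_mult: "\<forall>s\<in>carrier G. \<forall>t\<in>carrier G. act (s \<otimes> t) = act s \<circ> act t"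
    and act_homeo: "\<forall>s\<in>carrier G. homeomorphism UNIV UNIV (act s) (act (inv s))"
begin

lemma act_act: "s \<in> carrier G \<Longrightarrow> t \<in> carrier G \<Longrightarrow> act s (act t y) = act (s \<otimes> t) y"
  using act_mult by auto

lemma act_act_inv: "s \<in> carrier G \<Longrightarrow> act s (act (inv s) x) = x"
  by (simp add: act_act act_one)

lemma act_inv_mult: "s \<in> carrier G \<Longrightarrow> t \<in> carrier G \<Longrightarrow> act (inv (s \<otimes> t)) x = act (inv t) (act (inv s) x)"
  by (simp add: inv_mult_group act_act)

lemma act_inv_conj: "s \<in> carrier G \<Longrightarrow> u \<in> carrier G \<Longrightarrow>
  act (inv (inv s \<otimes> u \<otimes> s)) (act (inv s) x) = act (inv s) (act (inv u) x)"
proof -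
  assume s: "s \<in> carrier G" and u: "u \<in> carrier G"
  have "inv (inv s \<otimes> u \<otimes> s) \<otimes> inv s = inv s \<otimes> inv u"
    using s u by (simp add: inv_mult_group m_assoc)
  then show ?thesis using s u by (simp add: act_act)
qed

lemma conj_mult: "s \<in> carrier G \<Longrightarrow> t \<in> carrier G \<Longrightarrow> u \<in> carrier G \<Longrightarrow>
  inv (s \<otimes> t) \<otimes> u \<otimes> (s \<otimes> t) = inv t \<otimes> (inv s \<otimes> u \<otimes> s) \<otimes> t"
  by (simp add: inv_mult_group m_assoc)

lemma continuous_on_act: "s \<in> carrier G \<Longrightarrow> continuous_on UNIV (act s)"
  using act_homeo homeomorphism_def by blast

lemma mult_inv_cancel_left: "s \<in> carrier G \<Longrightarrow> t \<in> carrier G \<Longrightarrow> s \<otimes> (inv s \<otimes> t) = t"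
  by (simp add: m_assoc[symmetric])

lemma inv_mult_inv_mult: "r \<in> carrier G \<Longrightarrow> t \<in> carrier G \<Longrightarrow> inv (r \<otimes> inv t) \<otimes> r = t"
  by (simp add: inv_mult_group m_assoc)

lemma inj_on_mult_inv_left: "s \<in> carrier G \<Longrightarrow> A \<subseteq> carrier G \<Longrightarrow> inj_on (\<lambda>t. inv s \<otimes> t) A"
  by (auto simp: inj_on_def) (metis mult_inv_cancel_left subsetD)

subsection \<open>Norm bounds\<close>

definition rep_coord :: "('g \<Rightarrow> 'x \<Rightarrow> complex) \<Rightarrow> 'x \<Rightarrow> 'g set \<Rightarrow> ('g \<Rightarrow> complex) \<Rightarrow> 'g \<Rightarrow> complex" where
  "rep_coord a x F \<xi> r = (\<Sum>t\<in>F. \<xi> t * a (r \<otimes> inv t) (act r x))"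

definition rep_norm :: "('g \<Rightarrow> 'x \<Rightarrow> complex) \<Rightarrow> 'x \<Rightarrow> 'g set \<Rightarrow> ('g \<Rightarrow> complex) \<Rightarrow> 'g set \<Rightarrow> real" where
  "rep_norm a x F \<xi> R = L2_set (\<lambda>r. cmod (rep_coord a x F \<xi> r)) R"

definition admissible :: "'g set \<Rightarrow> ('g \<Rightarrow> complex) \<Rightarrow> 'g set \<Rightarrow> bool" where
  "admissible F \<xi> R \<longleftrightarrow> finite F \<and> F \<subseteq> carrier G \<and> (\<Sum>t\<in>F. (cmod (\<xi> t))\<^sup>2) \<le> 1
     \<and> finite R \<and> R \<subseteq> carrier G"

definition norm_bound :: "('g \<Rightarrow> 'x \<Rightarrow> complex) \<Rightarrow> real \<Rightarrow> bool" where
  "norm_bound a B \<longleftrightarrow> (\<forall>x F \<xi> R. admissible F \<xi> R \<longrightarrow> rep_norm a x F \<xi> R \<le> B)"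

definition cp_bounded :: "('g \<Rightarrow> 'x \<Rightarrow> complex) \<Rightarrow> bool" where
  "cp_bounded a \<longleftrightarrow> (\<exists>B. norm_bound a B)"

definition rep_norms :: "('g \<Rightarrow> 'x \<Rightarrow> complex) \<Rightarrow> real set" where
  "rep_norms a = {rep_norm a x F \<xi> R | x F \<xi> R. admissible F \<xi> R}"

lemma cp_norm_eq_Sup_rep_norms: "cp_norm G act a = Sup (rep_norms a)"
  unfolding cp_norm_def rep_norms_def rep_norm_def L2_set_def rep_coord_def admissible_def by simp

lemma admissible_empty: "admissible {} \<xi> {}"
  unfolding admissible_def by auto

lemma rep_norm_empty: "rep_norm a x {} \<xi> R = 0"
  unfolding rep_norm_def rep_coord_def L2_set_def by simp

lemma rep_norms_nonempty: "rep_norms a \<noteq> {}"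
  unfolding rep_norms_def using admissible_empty by blast

lemma norm_bound_nonneg: "norm_bound a B \<Longrightarrow> 0 \<le> B"
  unfolding norm_bound_def using rep_norm_empty admissible_empty by metis

lemma norm_bound_mono: "norm_bound a B \<Longrightarrow> B \<le> B' \<Longrightarrow> norm_bound a B'"
  unfolding norm_bound_def by (meson order_trans)

lemma bdd_above_rep_norms_iff: "bdd_above (rep_norms a) \<longleftrightarrow> cp_bounded a"
  unfolding bdd_above_def cp_bounded_def norm_bound_def rep_norms_def by blast

lemma cp_norm_le: "norm_bound a B \<Longrightarrow> cp_norm G act a \<le> B"
  unfolding cp_norm_eq_Sup_rep_norms
  by (rule cSup_least[OF rep_norms_nonempty]) (auto simp: rep_norms_def norm_bound_def)

lemma norm_bound_cp_norm: "cp_bounded a \<Longrightarrow> norm_bound a (cp_norm G act a)"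
  unfolding cp_norm_eq_Sup_rep_norms norm_bound_def
  by (auto intro!: cSup_upper simp: bdd_above_rep_norms_iff) (auto simp: rep_norms_def)

lemma Sup_real_not_bdd_above: "\<not> bdd_above (X::real set) \<Longrightarrow> Sup X = Sup (UNIV::real set)"
proof -
  assume "\<not> bdd_above X"
  then have "(\<lambda>z. \<forall>x\<in>X. x \<le> z) = (\<lambda>z. \<forall>x\<in>(UNIV::real set). x \<le> z)"
    by (auto simp: bdd_above_def) (meson gt_ex not_le)
  then show ?thesis unfolding Sup_real_def by simp
qed

lemma cp_norm_not_cp_bounded: "\<not> cp_bounded a \<Longrightarrow> cp_norm G act a = Sup (UNIV::real set)"
  unfolding cp_norm_eq_Sup_rep_norms
  by (rule Sup_real_not_bdd_above) (simp add: bdd_above_rep_norms_iff)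

lemma rep_coord_lincomb:
  "rep_coord (\<lambda>u y. c * p u y + d * q u y) x F \<xi> r = c * rep_coord p x F \<xi> r + d * rep_coord q x F \<xi> r"
  unfolding rep_coord_def by (simp add: sum.distrib sum_distrib_left algebra_simps)

lemma rep_norm_lincomb:
  "rep_norm (\<lambda>u y. c * p u y + d * q u y) x F \<xi> R \<le> cmod c * rep_norm p x F \<xi> R + cmod d * rep_norm q x F \<xi> R"
proof -
  have "rep_norm (\<lambda>u y. c * p u y + d * q u y) x F \<xi> R
      \<le> L2_set (\<lambda>r. cmod c * cmod (rep_coord p x F \<xi> r) + cmod d * cmod (rep_coord q x F \<xi> r)) R"
    unfolding rep_norm_def rep_coord_lincomb
    by (rule L2_set_mono) (auto intro: order_trans[OF norm_triangle_ineq] simp: norm_mult)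
  also have "\<dots> \<le> cmod c * rep_norm p x F \<xi> R + cmod d * rep_norm q x F \<xi> R"
    unfolding rep_norm_def
    by (rule order_trans[OF L2_set_triangle_ineq]) (simp add: L2_set_right_distrib)
  finally show ?thesis .
qed

lemma norm_bound_lincomb:
  "norm_bound p B1 \<Longrightarrow> norm_bound q B2 \<Longrightarrow>
   norm_bound (\<lambda>u y. c * p u y + d * q u y) (cmod c * B1 + cmod d * B2)"
  unfolding norm_bound_def
proof (intro allI impI)
  fix x F \<xi> R assume "\<forall>x F \<xi> R. admissible F \<xi> R \<longrightarrow> rep_norm p x F \<xi> R \<le> B1"
    and "\<forall>x F \<xi> R. admissible F \<xi> R \<longrightarrow> rep_norm q x F \<xi> R \<le> B2" and "admissible F \<xi> R"
  then have "cmod c * rep_norm p x F \<xi> R + cmod d * rep_norm q x F \<xi> R \<le> cmod c * B1 + cmod d * B2"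
    by (intro add_mono mult_left_mono) auto
  then show "rep_norm (\<lambda>u y. c * p u y + d * q u y) x F \<xi> R \<le> cmod c * B1 + cmod d * B2"
    using rep_norm_lincomb order_trans by blast
qed

lemma cp_bounded_lincomb:
  "cp_bounded p \<Longrightarrow> cp_bounded q \<Longrightarrow> cp_bounded (\<lambda>u y. c * p u y + d * q u y)"
  unfolding cp_bounded_def using norm_bound_lincomb by blast

lemma norm_bound_add: "norm_bound p B1 \<Longrightarrow> norm_bound q B2 \<Longrightarrow> norm_bound (\<lambda>u y. p u y + q u y) (B1 + B2)"
  using norm_bound_lincomb[of p B1 q B2 1 1] by simp

lemma norm_bound_sum:
  "finite K \<Longrightarrow> (\<And>k. k \<in> K \<Longrightarrow> norm_bound (g k) (M k)) \<Longrightarrow>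
   norm_bound (\<lambda>u y. \<Sum>k\<in>K. g k u y) (\<Sum>k\<in>K. M k)"
proof (induction K rule: finite_induct)
  case empty
  then show ?case unfolding norm_bound_def rep_norm_def rep_coord_def L2_set_def by simp
next
  case (insert k K)
  then have "norm_bound (\<lambda>u y. g k u y + (\<Sum>k\<in>K. g k u y)) (M k + (\<Sum>k\<in>K. M k))"
    by (intro norm_bound_add) auto
  then show ?case using insert by simp
qed

lemma L2_set_squared: "(L2_set g A)\<^sup>2 = (\<Sum>i\<in>A. (g i)\<^sup>2)"
  unfolding L2_set_def by (simp add: sum_nonneg)

lemma rep_norm_le_norm_bound:
  assumes b: "norm_bound a B" and F: "finite F" "F \<subseteq> carrier G" and R: "finite R" "R \<subseteq> carrier G"
  shows "rep_norm a x F \<xi> R \<le> B * sqrt (\<Sum>t\<in>F. (cmod (\<xi> t))\<^sup>2)"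
proof -
  define N where "N = sqrt (\<Sum>t\<in>F. (cmod (\<xi> t))\<^sup>2)"
  have B0: "0 \<le> B" using norm_bound_nonneg[OF b] .
  show ?thesis
  proof (cases "N = 0")
    case True
    then have "\<forall>t\<in>F. \<xi> t = 0" using F unfolding N_def by (simp add: sum_nonneg_eq_0_iff)
    then have "rep_norm a x F \<xi> R = 0" unfolding rep_norm_def rep_coord_def L2_set_def by simp
    then show ?thesis using B0 by (simp add: N_def sum_nonneg)
  next
    case False
    then have N0: "N > 0" unfolding N_def by (simp add: sum_nonneg less_le)
    define c where "c = complex_of_real (1 / N)"
    have cc: "cmod c = 1 / N" unfolding c_def using N0 by (simp add: norm_divide)
    have "(\<Sum>t\<in>F. (cmod (\<xi> t * c))\<^sup>2) = (\<Sum>t\<in>F. (cmod (\<xi> t))\<^sup>2) / N\<^sup>2"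
      unfolding c_def using N0 by (simp add: norm_divide power_divide sum_divide_distrib)
    also have "\<dots> = 1" using N0 unfolding N_def by (simp add: sum_nonneg)
    finally have "admissible F (\<lambda>t. \<xi> t * c) R" using F R by (simp add: admissible_def)
    then have le: "rep_norm a x F (\<lambda>t. \<xi> t * c) R \<le> B" using b by (simp add: norm_bound_def)
    have "\<And>r. rep_coord a x F (\<lambda>t. \<xi> t * c) r = c * rep_coord a x F \<xi> r"
      unfolding rep_coord_def by (simp add: sum_distrib_left mult_ac)
    then have "(\<lambda>r. cmod (rep_coord a x F (\<lambda>t. \<xi> t * c) r)) = (\<lambda>r. (1 / N) * cmod (rep_coord a x F \<xi> r))"
      by (simp only: norm_mult cc mult.commute)
    then have "rep_norm a x F (\<lambda>t. \<xi> t * c) R = (1 / N) * rep_norm a x F \<xi> R"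
      unfolding rep_norm_def by (simp only:) (rule L2_set_right_distrib[symmetric], use N0 in simp)
    with le N0 have "rep_norm a x F \<xi> R \<le> B * N" by (simp add: divide_le_eq mult.commute)
    then show ?thesis by (simp add: N_def)
  qed
qed

lemma gen_prob_sum_squares: "gen_prob G I s f \<Longrightarrow> finite I \<Longrightarrow> (\<Sum>i\<in>I. (f i y)\<^sup>2) = 1"
  unfolding gen_prob_def using has_sum_unique has_sum_finite by blast

lemma gen_prob_carrier: "gen_prob G I s f \<Longrightarrow> i \<in> I \<Longrightarrow> s i \<in> carrier G"
  unfolding gen_prob_def by blast

lemma gen_apply_finite: "u \<in> carrier G \<Longrightarrow> finite I \<Longrightarrow> gen_apply G act I s f a u x =
  (\<Sum>i\<in>I. complex_of_real (f i x) * a (inv (s i) \<otimes> u \<otimes> s i) (act (inv (s i)) x)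
     * complex_of_real (f i (act (inv u) x)))"
  unfolding gen_apply_def by simp

lemma gen_apply_outside: "u \<notin> carrier G \<Longrightarrow> gen_apply G act I s f a u = (\<lambda>_. 0)"
  unfolding gen_apply_def by auto

subsection \<open>Generalized measures are contractions\<close>

text \<open>In the representation pi_x, the i-th term of \<mu> a is a tested against the vector \<xi>
multiplied by f_i and translated by s_i.\<close>

definition shifted_vec :: "('i \<Rightarrow> 'g) \<Rightarrow> ('i \<Rightarrow> 'x \<Rightarrow> real) \<Rightarrow> ('g \<Rightarrow> complex) \<Rightarrow> 'x \<Rightarrow> 'i \<Rightarrow> 'g \<Rightarrow> complex"
  where "shifted_vec s f \<xi> x i t = \<xi> (s i \<otimes> t) * complex_of_real (f i (act (s i \<otimes> t) x))"

lemma rep_coord_gen_apply: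
  assumes sI: "\<And>i. i \<in> I \<Longrightarrow> s i \<in> carrier G" and fI: "finite I"
    and F: "F \<subseteq> carrier G" and r: "r \<in> carrier G"
  shows "rep_coord (gen_apply G act I s f a) x F \<xi> r =
    (\<Sum>i\<in>I. complex_of_real (f i (act r x)) *
       rep_coord a x ((\<lambda>t. inv (s i) \<otimes> t) ` F) (shifted_vec s f \<xi> x i) (inv (s i) \<otimes> r))"
proof -
  let ?a = "\<lambda>i t. a (inv (s i) \<otimes> (r \<otimes> inv t) \<otimes> s i) (act (inv (s i) \<otimes> r) x)"
  have "rep_coord (gen_apply G act I s f a) x F \<xi> r =
      (\<Sum>t\<in>F. \<Sum>i\<in>I. complex_of_real (f i (act r x)) * (\<xi> t * complex_of_real (f i (act t x)) * ?a i t))"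
    unfolding rep_coord_def
  proof (rule sum.cong[OF refl])
    fix t assume "t \<in> F"
    with F r have tc: "t \<in> carrier G" "r \<otimes> inv t \<in> carrier G" by auto
    have "\<And>i. i \<in> I \<Longrightarrow> act (inv (s i)) (act r x) = act (inv (s i) \<otimes> r) x"
      using sI r by (simp add: act_act)
    moreover have "act (inv (r \<otimes> inv t)) (act r x) = act t x"
      using tc r by (simp add: act_act inv_mult_inv_mult)
    ultimately show "\<xi> t * gen_apply G act I s f a (r \<otimes> inv t) (act r x) =
        (\<Sum>i\<in>I. complex_of_real (f i (act r x)) * (\<xi> t * complex_of_real (f i (act t x)) * ?a i t))"
      using tc fI by (simp add: gen_apply_finite sum_distrib_left mult_ac)
  qed
  also have "\<dots> = (\<Sum>i\<in>I. complex_of_real (f i (act r x)) *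
      (\<Sum>t\<in>F. \<xi> t * complex_of_real (f i (act t x)) * ?a i t))"
    by (subst sum.swap) (simp add: sum_distrib_left)
  also have "\<dots> = (\<Sum>i\<in>I. complex_of_real (f i (act r x)) *
       rep_coord a x ((\<lambda>t. inv (s i) \<otimes> t) ` F) (shifted_vec s f \<xi> x i) (inv (s i) \<otimes> r))"
  proof (rule sum.cong[OF refl])
    fix i assume i: "i \<in> I"
    have conj: "(inv (s i) \<otimes> r) \<otimes> inv (inv (s i) \<otimes> t) = inv (s i) \<otimes> (r \<otimes> inv t) \<otimes> s i"
      if "t \<in> carrier G" for t
      using that sI[OF i] r by (simp add: inv_mult_group m_assoc)
    have "(\<Sum>t\<in>F. \<xi> t * complex_of_real (f i (act t x)) * ?a i t) =
      rep_coord a x ((\<lambda>t. inv (s i) \<otimes> t) ` F) (shifted_vec s f \<xi> x i) (inv (s i) \<otimes> r)"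
      unfolding rep_coord_def sum.reindex[OF inj_on_mult_inv_left[OF sI[OF i] F]] using F sI[OF i]
      by (intro sum.cong refl) (auto simp: shifted_vec_def conj mult_inv_cancel_left subsetD)
    then show "complex_of_real (f i (act r x)) * (\<Sum>t\<in>F. \<xi> t * complex_of_real (f i (act t x)) * ?a i t) =
      complex_of_real (f i (act r x)) *
        rep_coord a x ((\<lambda>t. inv (s i) \<otimes> t) ` F) (shifted_vec s f \<xi> x i) (inv (s i) \<otimes> r)"
      by simp
  qed
  finally show ?thesis .
qed

lemma rep_coord_gen_apply_squared_le:
  assumes gp: "gen_prob G I s f" and fI: "finite I" and F: "F \<subseteq> carrier G" and r: "r \<in> carrier G"
  shows "(cmod (rep_coord (gen_apply G act I s f a) x F \<xi> r))\<^sup>2 \<le>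
    (\<Sum>i\<in>I. (cmod (rep_coord a x ((\<lambda>t. inv (s i) \<otimes> t) ` F) (shifted_vec s f \<xi> x i) (inv (s i) \<otimes> r)))\<^sup>2)"
    (is "_ \<le> (\<Sum>i\<in>I. (cmod (?c i))\<^sup>2)")
proof -
  have f_nonneg: "\<And>i y. i \<in> I \<Longrightarrow> f i y \<ge> 0" using gp by (auto simp: gen_prob_def)
  have expand: "rep_coord (gen_apply G act I s f a) x F \<xi> r = (\<Sum>i\<in>I. complex_of_real (f i (act r x)) * ?c i)"
    by (rule rep_coord_gen_apply[of I s, OF gen_prob_carrier[OF gp] fI F r])
  have "cmod (rep_coord (gen_apply G act I s f a) x F \<xi> r) \<le> (\<Sum>i\<in>I. f i (act r x) * cmod (?c i))"
    unfolding expand by (rule order_trans[OF norm_sum]) (simp add: norm_mult f_nonneg)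
  then have "(cmod (rep_coord (gen_apply G act I s f a) x F \<xi> r))\<^sup>2 \<le> (\<Sum>i\<in>I. f i (act r x) * cmod (?c i))\<^sup>2"
    by (intro power_mono) auto
  also have "\<dots> \<le> (\<Sum>i\<in>I. (f i (act r x))\<^sup>2) * (\<Sum>i\<in>I. (cmod (?c i))\<^sup>2)"
    by (rule Cauchy_Schwarz_ineq_sum)
  finally show ?thesis using gen_prob_sum_squares[OF gp fI] by simp
qed

lemma sum_shifted_vec_squared:
  assumes "s i \<in> carrier G" and "F \<subseteq> carrier G"
  shows "(\<Sum>t\<in>(\<lambda>t. inv (s i) \<otimes> t) ` F. (cmod (shifted_vec s f \<xi> x i t))\<^sup>2)
    = (\<Sum>t\<in>F. (cmod (\<xi> t))\<^sup>2 * (f i (act t x))\<^sup>2)"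
  unfolding sum.reindex[OF inj_on_mult_inv_left[OF assms]] using assms
  by (intro sum.cong refl) (auto simp: shifted_vec_def mult_inv_cancel_left subsetD norm_mult power_mult_distrib)

lemma norm_bound_gen_apply:
  assumes gp: "gen_prob G I s f" and fI: "finite I" and b: "norm_bound a B"
  shows "norm_bound (gen_apply G act I s f a) B"
  unfolding norm_bound_def
proof (intro allI impI)
  fix x F \<xi> R assume "admissible F \<xi> R"
  then have F: "finite F" "F \<subseteq> carrier G" and R: "finite R" "R \<subseteq> carrier G"
    and \<xi>: "(\<Sum>t\<in>F. (cmod (\<xi> t))\<^sup>2) \<le> 1" by (auto simp: admissible_def)
  have sI: "\<And>i. i \<in> I \<Longrightarrow> s i \<in> carrier G" using gp by (rule gen_prob_carrier)
  define Fi where "Fi i = (\<lambda>t. inv (s i) \<otimes> t) ` F" for i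
  define Ri where "Ri i = (\<lambda>t. inv (s i) \<otimes> t) ` R" for i
  let ?m = "gen_apply G act I s f a" and ?\<eta> = "shifted_vec s f \<xi> x"
  let ?c = "\<lambda>i r. rep_coord a x (Fi i) (?\<eta> i) (inv (s i) \<otimes> r)"
  have "(rep_norm ?m x F \<xi> R)\<^sup>2 = (\<Sum>r\<in>R. (cmod (rep_coord ?m x F \<xi> r))\<^sup>2)"
    unfolding rep_norm_def L2_set_squared ..
  also have "\<dots> \<le> (\<Sum>r\<in>R. \<Sum>i\<in>I. (cmod (?c i r))\<^sup>2)"
    unfolding Fi_def using R rep_coord_gen_apply_squared_le[OF gp fI F(2)] by (intro sum_mono) auto
  also have "\<dots> = (\<Sum>i\<in>I. (rep_norm a x (Fi i) (?\<eta> i) (Ri i))\<^sup>2)"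
  proof (subst sum.swap, rule sum.cong[OF refl])
    fix i assume "i \<in> I"
    show "(\<Sum>r\<in>R. (cmod (?c i r))\<^sup>2) = (rep_norm a x (Fi i) (?\<eta> i) (Ri i))\<^sup>2"
      unfolding rep_norm_def L2_set_squared Ri_def
      by (simp add: sum.reindex[OF inj_on_mult_inv_left[OF sI[OF \<open>i \<in> I\<close>] R(2)]])
  qed
  also have "\<dots> \<le> (\<Sum>i\<in>I. (B * sqrt (\<Sum>t\<in>Fi i. (cmod (?\<eta> i t))\<^sup>2))\<^sup>2)"
    using F R sI
    by (intro sum_mono power_mono rep_norm_le_norm_bound[OF b]) (auto simp: rep_norm_def Fi_def Ri_def)
  also have "\<dots> = B\<^sup>2 * (\<Sum>t\<in>F. (cmod (\<xi> t))\<^sup>2 * (\<Sum>i\<in>I. (f i (act t x))\<^sup>2))"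
    unfolding Fi_def using sI F(2)
    by (simp add: power_mult_distrib sum_nonneg sum_shifted_vec_squared sum_distrib_left sum.swap[of _ I F])
  also have "\<dots> \<le> B\<^sup>2" using \<xi> by (simp add: gen_prob_sum_squares[OF gp fI] mult_left_le)
  finally show "rep_norm ?m x F \<xi> R \<le> B"
    using norm_bound_nonneg[OF b] by (rule power2_le_imp_le)
qed

subsection \<open>Invariance of the crossed product\<close>

lemma rep_coord_single_coeff:
  assumes s: "s \<in> carrier G" and F: "F \<subseteq> carrier G" "finite F" and r: "r \<in> carrier G"
  shows "rep_coord (\<lambda>u y. if u = s then g y else 0) x F \<xi> r
    = (if inv s \<otimes> r \<in> F then \<xi> (inv s \<otimes> r) * g (act r x) else 0)"
proof -
  have "(r \<otimes> inv t = s) \<longleftrightarrow> (inv s \<otimes> r = t)" if "t \<in> carrier G" for t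
  proof
    assume "r \<otimes> inv t = s"
    then have "inv s \<otimes> r = inv (r \<otimes> inv t) \<otimes> r" by simp
    then show "inv s \<otimes> r = t" using inv_mult_inv_mult r that by simp
  next
    assume "inv s \<otimes> r = t"
    then show "r \<otimes> inv t = s" using r s by (auto simp: inv_mult_group m_assoc[symmetric])
  qed
  then have "rep_coord (\<lambda>u y. if u = s then g y else 0) x F \<xi> r
      = (\<Sum>t\<in>F. if inv s \<otimes> r = t then \<xi> t * g (act r x) else 0)"
    unfolding rep_coord_def using F by (intro sum.cong) auto
  then show ?thesis using F by simp
qed

lemma norm_bound_single_coeff:
  assumes M: "\<And>y. cmod (g y) \<le> M" and s: "s \<in> carrier G"
  shows "norm_bound (\<lambda>u y. if u = s then g y else 0) M"
  unfolding norm_bound_def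
proof (intro allI impI)
  fix x F \<xi> R assume "admissible F \<xi> R"
  then have F: "finite F" "F \<subseteq> carrier G" and R: "finite R" "R \<subseteq> carrier G"
    and \<xi>: "(\<Sum>t\<in>F. (cmod (\<xi> t))\<^sup>2) \<le> 1" by (auto simp: admissible_def)
  have "0 \<le> M" using M[of undefined] norm_ge_zero order_trans by blast
  let ?g = "\<lambda>u y. if u = s then g y else 0"
  define h where "h t = (cmod (\<xi> t))\<^sup>2" for t
  define R' where "R' = {r \<in> R. inv s \<otimes> r \<in> F}"
  have "(rep_norm ?g x F \<xi> R)\<^sup>2 = (\<Sum>r\<in>R. (cmod (rep_coord ?g x F \<xi> r))\<^sup>2)"
    unfolding rep_norm_def L2_set_squared ..
  also have "\<dots> \<le> (\<Sum>r\<in>R. M\<^sup>2 * (if inv s \<otimes> r \<in> F then h (inv s \<otimes> r) else 0))"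
  proof (rule sum_mono)
    fix r assume "r \<in> R"
    then have r: "r \<in> carrier G" using R by auto
    have "(cmod (g (act r x)))\<^sup>2 \<le> M\<^sup>2" using M by (intro power_mono) auto
    then show "(cmod (rep_coord ?g x F \<xi> r))\<^sup>2 \<le> M\<^sup>2 * (if inv s \<otimes> r \<in> F then h (inv s \<otimes> r) else 0)"
      unfolding rep_coord_single_coeff[OF s F(2,1) r] h_def
      by (simp add: norm_mult power_mult_distrib mult.commute mult_right_mono)
  qed
  also have "\<dots> = M\<^sup>2 * (\<Sum>r\<in>R'. h (inv s \<otimes> r))"
    unfolding sum_distrib_left[symmetric] R'_def using R by (simp add: sum.inter_filter)
  also have "\<dots> = M\<^sup>2 * (\<Sum>t\<in>(\<lambda>r. inv s \<otimes> r) ` R'. h t)"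
    using R by (simp add: sum.reindex[OF inj_on_mult_inv_left[OF s]] R'_def subset_iff)
  also have "\<dots> \<le> M\<^sup>2 * (\<Sum>t\<in>F. h t)"
    by (intro mult_left_mono sum_mono2) (auto simp: F R'_def h_def)
  also have "\<dots> \<le> M\<^sup>2" by (rule mult_left_le) (use \<xi> in \<open>auto simp: h_def\<close>)
  finally show "rep_norm ?g x F \<xi> R \<le> M" using \<open>0 \<le> M\<close> by (rule power2_le_imp_le)
qed

lemma cp_bounded_cp_fin:
  assumes cpt: "compact (UNIV :: 'x set)" and b: "cp_fin G b"
  shows "cp_bounded b"
proof -
  define S where "S = {s. b s \<noteq> (\<lambda>_. 0)}"
  have fS: "finite S" and cont: "\<And>s. continuous_on UNIV (b s)" and out: "\<And>s. s \<notin> carrier G \<Longrightarrow> b s = (\<lambda>_. 0)"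
    using b by (auto simp: cp_fin_def S_def)
  have SC: "S \<subseteq> carrier G" using out S_def by auto
  have "\<exists>M. \<forall>y. cmod (b s y) \<le> M" for s
  proof -
    have "compact (b s ` UNIV)" by (rule compact_continuous_image[OF cont cpt])
    then have "bounded (b s ` UNIV)" by (rule compact_imp_bounded)
    then show ?thesis by (auto simp: bounded_iff)
  qed
  then obtain M where M: "\<And>s y. cmod (b s y) \<le> M s" by metis
  have eq: "b = (\<lambda>u y. \<Sum>s\<in>S. (if u = s then b s y else 0))"
  proof (intro ext)
    fix u y
    show "b u y = (\<Sum>s\<in>S. (if u = s then b s y else 0))"
    proof (cases "u \<in> S")
      case False then show ?thesis using fS by (auto simp: S_def)
    qed (use fS in simp)
  qed
  have "norm_bound (\<lambda>u y. \<Sum>s\<in>S. (if u = s then b s y else 0)) (\<Sum>s\<in>S. M s)"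
    using fS SC by (intro norm_bound_sum norm_bound_single_coeff M) auto
  then show ?thesis unfolding cp_bounded_def eq[symmetric] by blast
qed

lemma gen_apply_lincomb:
  assumes "finite I"
  shows "gen_apply G act I s f (\<lambda>u y. c * p u y + d * q u y)
    = (\<lambda>u y. c * gen_apply G act I s f p u y + d * gen_apply G act I s f q u y)"
  unfolding gen_apply_def infsum_finite[OF assms]
  by (intro ext) (simp add: sum_distrib_left sum.distrib algebra_simps)

lemma gen_apply_diff:
  assumes "finite I"
  shows "gen_apply G act I s f (\<lambda>u y. p u y - q u y)
    = (\<lambda>u y. gen_apply G act I s f p u y - gen_apply G act I s f q u y)"
  using gen_apply_lincomb[OF assms, where c = 1 and d = "-1"] by simp

lemma cp_E_eq_0_iff: "cp_E G a = (\<lambda>_ _. 0) \<longleftrightarrow> a \<one> = (\<lambda>_. 0)"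
  unfolding cp_E_def by (auto simp: fun_eq_iff)

lemma cp_E_gen_apply:
  assumes "cp_E G a = (\<lambda>_ _. 0)" and "gen_prob G I s f"
  shows "cp_E G (gen_apply G act I s f a) = (\<lambda>_ _. 0)"
  using assms unfolding cp_E_eq_0_iff gen_apply_def by (auto simp: gen_prob_def infsum_0)

lemma support_gen_apply_subset:
  assumes sI: "\<And>i. i \<in> I \<Longrightarrow> s i \<in> carrier G" and fI: "finite I"
  shows "{u. gen_apply G act I s f b u \<noteq> (\<lambda>_. 0)}
    \<subseteq> (\<Union>i\<in>I. (\<lambda>v. s i \<otimes> v \<otimes> inv (s i)) ` {v. b v \<noteq> (\<lambda>_. 0)})"
proof
  fix u assume "u \<in> {u. gen_apply G act I s f b u \<noteq> (\<lambda>_. 0)}"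
  then have nz: "gen_apply G act I s f b u \<noteq> (\<lambda>_. 0)" by simp
  then have u: "u \<in> carrier G" using gen_apply_outside by blast
  have "\<exists>i\<in>I. b (inv (s i) \<otimes> u \<otimes> s i) \<noteq> (\<lambda>_. 0)"
  proof (rule ccontr)
    assume "\<not> ?thesis"
    then have "gen_apply G act I s f b u = (\<lambda>_. 0)"
      unfolding gen_apply_finite[OF u fI] by (intro ext sum.neutral) auto
    with nz show False by simp
  qed
  then obtain i where i: "i \<in> I" and bi: "b (inv (s i) \<otimes> u \<otimes> s i) \<noteq> (\<lambda>_. 0)" by blast
  have "u = s i \<otimes> (inv (s i) \<otimes> u \<otimes> s i) \<otimes> inv (s i)"
    using sI[OF i] u by (simp add: m_assoc mult_inv_cancel_left)
  then show "u \<in> (\<Union>i\<in>I. (\<lambda>v. s i \<otimes> v \<otimes> inv (s i)) ` {v. b v \<noteq> (\<lambda>_. 0)})"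
    using i bi by blast
qed

lemma cp_fin_gen_apply:
  assumes gp: "gen_prob G I s f" and fI: "finite I" and b: "cp_fin G b"
  shows "cp_fin G (gen_apply G act I s f b)"
proof -
  have sI: "\<And>i. i \<in> I \<Longrightarrow> s i \<in> carrier G" and f_cont: "\<And>i. i \<in> I \<Longrightarrow> continuous_on UNIV (f i)"
    using gp by (auto simp: gen_prob_def)
  have "finite {v. b v \<noteq> (\<lambda>_. 0)}" and b_cont: "\<And>v. continuous_on UNIV (b v)"
    using b by (auto simp: cp_fin_def)
  then have fin: "finite {u. gen_apply G act I s f b u \<noteq> (\<lambda>_. 0)}"
    using fI by (intro finite_subset[OF support_gen_apply_subset[of I s, OF sI fI]]) auto
  have "continuous_on UNIV (gen_apply G act I s f b u)" for u
  proof (cases "u \<in> carrier G")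
    case True
    have "continuous_on UNIV (\<lambda>x. \<Sum>i\<in>I. complex_of_real (f i x) * b (inv (s i) \<otimes> u \<otimes> s i) (act (inv (s i)) x)
             * complex_of_real (f i (act (inv u) x)))"
    proof (intro continuous_on_sum continuous_on_mult)
      fix i assume i: "i \<in> I"
      show "continuous_on UNIV (\<lambda>x. complex_of_real (f i x))" using f_cont[OF i] by simp
      show "continuous_on UNIV (\<lambda>x. b (inv (s i) \<otimes> u \<otimes> s i) (act (inv (s i)) x))"
        by (rule continuous_on_compose2[OF b_cont continuous_on_act]) (use sI[OF i] in auto)
      have "continuous_on UNIV (\<lambda>x. f i (act (inv u) x))"
        by (rule continuous_on_compose2[OF f_cont[OF i] continuous_on_act]) (use True in auto)
      then show "continuous_on UNIV (\<lambda>x. complex_of_real (f i (act (inv u) x)))" by simp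
    qed
    then show ?thesis unfolding gen_apply_finite[OF True fI] .
  next
    case False
    then show ?thesis unfolding gen_apply_outside[OF False] by simp
  qed
  then show ?thesis unfolding cp_fin_def using fin gen_apply_outside by blast
qed

lemma cp_bounded_gen_apply:
  "gen_prob G I s f \<Longrightarrow> finite I \<Longrightarrow> cp_bounded a \<Longrightarrow> cp_bounded (gen_apply G act I s f a)"
  unfolding cp_bounded_def using norm_bound_gen_apply by blast

lemma cp_norm_gen_apply_le:
  "gen_prob G I s f \<Longrightarrow> finite I \<Longrightarrow> cp_bounded a \<Longrightarrow>
   cp_norm G act (gen_apply G act I s f a) \<le> cp_norm G act a"
  by (rule cp_norm_le[OF norm_bound_gen_apply[OF _ _ norm_bound_cp_norm]])

lemma cp_norm_nonneg: "cp_bounded a \<Longrightarrow> 0 \<le> cp_norm G act a"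
  using norm_bound_cp_norm norm_bound_nonneg by blast

lemma gen_apply_crossed_product:
  assumes cpt: "compact (UNIV :: 'x set)" and gp: "gen_prob G I s f" and fI: "finite I"
    and a: "a \<in> crossed_product G act" and "cp_bounded a"
  shows "gen_apply G act I s f a \<in> crossed_product G act"
proof -
  obtain b where b: "\<And>n. cp_fin G (b n)"
    and lim: "(\<lambda>n. cp_norm G act (\<lambda>s y. a s y - b n s y)) \<longlonglongrightarrow> 0"
    using a unfolding crossed_product_def by blast
  let ?m = "gen_apply G act I s f"
  have "cp_bounded (\<lambda>s y. a s y - b n s y)" for n
    using cp_bounded_lincomb[of a "b n" 1 "-1"] \<open>cp_bounded a\<close> cp_bounded_cp_fin[OF cpt b] by simp
  then have "0 \<le> cp_norm G act (\<lambda>s y. ?m a s y - ?m (b n) s y)"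
    and "cp_norm G act (\<lambda>s y. ?m a s y - ?m (b n) s y) \<le> cp_norm G act (\<lambda>s y. a s y - b n s y)" for n
    unfolding gen_apply_diff[OF fI, symmetric]
    by (simp_all add: cp_norm_nonneg cp_bounded_gen_apply cp_norm_gen_apply_le gp fI)
  then have "(\<lambda>n. cp_norm G act (\<lambda>s y. ?m a s y - ?m (b n) s y)) \<longlonglongrightarrow> 0"
    by (intro real_tendsto_sandwich[OF _ _ tendsto_const lim]) auto
  moreover have "\<forall>n. cp_fin G (?m (b n))" using cp_fin_gen_apply[OF gp fI b] by blast
  ultimately have "\<exists>b'. (\<forall>n. cp_fin G (b' n)) \<and> (\<lambda>n. cp_norm G act (\<lambda>s y. ?m a s y - b' n s y)) \<longlonglongrightarrow> 0"
    by (intro exI[of _ "\<lambda>n. ?m (b n)"]) simp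
  then show ?thesis unfolding crossed_product_def using gen_apply_outside by blast
qed

text \<open>Unbounded elements all have the junk norm Sup UNIV. Unless this value is 0, an element of
the crossed product, being a norm limit of bounded elements, differs from one of them by a bounded
element.\<close>

lemma cp_bounded_crossed_product:
  assumes cpt: "compact (UNIV :: 'x set)" and cU: "Sup (UNIV::real set) \<noteq> 0"
    and a: "a \<in> crossed_product G act"
  shows "cp_bounded a"
proof -
  obtain b where bf: "\<And>n. cp_fin G (b n)" and lim: "(\<lambda>n. cp_norm G act (\<lambda>s y. a s y - b n s y)) \<longlonglongrightarrow> 0"
    using a unfolding crossed_product_def by blast
  have "\<bar>Sup (UNIV::real set)\<bar> > 0" using cU by simp
  from tendstoD[OF lim this] obtain N where "dist (cp_norm G act (\<lambda>s y. a s y - b N s y)) 0 < \<bar>Sup (UNIV::real set)\<bar>"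
    by (auto simp: eventually_sequentially)
  then have "cp_norm G act (\<lambda>s y. a s y - b N s y) \<noteq> Sup (UNIV::real set)" by auto
  then have "cp_bounded (\<lambda>s y. a s y - b N s y)" using cp_norm_not_cp_bounded by blast
  then obtain B1 where B1: "norm_bound (\<lambda>s y. a s y - b N s y) B1" using cp_bounded_def by blast
  obtain B2 where B2: "norm_bound (b N) B2" using cp_bounded_cp_fin[OF cpt bf] cp_bounded_def by blast
  have "norm_bound (\<lambda>u y. (a u y - b N u y) + b N u y) (B1 + B2)" by (rule norm_bound_add[OF B1 B2])
  then show ?thesis unfolding cp_bounded_def by auto
qed

subsection \<open>Composition of generalized measures\<close>

text \<open>The composite of \<Sum> f_i s_i f_i and \<Sum> g_j t_j g_j is indexed by the pairs (i,j), coded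
as natural numbers, with weights f_i (g_j o s_i^-1); pairs of zero weight are dropped, since
a generalized measure has nonzero weights.\<close>

definition comp_weight :: "(nat \<Rightarrow> 'g) \<Rightarrow> (nat \<Rightarrow> 'x \<Rightarrow> real) \<Rightarrow> (nat \<Rightarrow> 'x \<Rightarrow> real)
    \<Rightarrow> nat \<Rightarrow> nat \<Rightarrow> 'x \<Rightarrow> real"
  where "comp_weight s1 f1 f2 i j = (\<lambda>x. f1 i x * f2 j (act (inv (s1 i)) x))"

definition comp_index :: "nat set \<Rightarrow> (nat \<Rightarrow> 'g) \<Rightarrow> (nat \<Rightarrow> 'x \<Rightarrow> real) \<Rightarrow> nat set
    \<Rightarrow> (nat \<Rightarrow> 'x \<Rightarrow> real) \<Rightarrow> nat set"
  where "comp_index I1 s1 f1 I2 f2 =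
    {k. \<exists>i\<in>I1. \<exists>j\<in>I2. k = prod_encode (i, j) \<and> comp_weight s1 f1 f2 i j \<noteq> (\<lambda>_. 0)}"

definition comp_group :: "(nat \<Rightarrow> 'g) \<Rightarrow> (nat \<Rightarrow> 'g) \<Rightarrow> nat \<Rightarrow> 'g"
  where "comp_group s1 s2 k = s1 (fst (prod_decode k)) \<otimes> s2 (snd (prod_decode k))"

definition comp_fun :: "(nat \<Rightarrow> 'g) \<Rightarrow> (nat \<Rightarrow> 'x \<Rightarrow> real) \<Rightarrow> (nat \<Rightarrow> 'x \<Rightarrow> real) \<Rightarrow> nat \<Rightarrow> 'x \<Rightarrow> real"
  where "comp_fun s1 f1 f2 k = comp_weight s1 f1 f2 (fst (prod_decode k)) (snd (prod_decode k))"

lemma comp_index_subset: "comp_index I1 s1 f1 I2 f2 \<subseteq> prod_encode ` (I1 \<times> I2)"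
  unfolding comp_index_def by auto

lemma finite_comp_index: "finite I1 \<Longrightarrow> finite I2 \<Longrightarrow> finite (comp_index I1 s1 f1 I2 f2)"
  by (rule finite_subset[OF comp_index_subset]) auto

lemma sum_comp_index:
  assumes fI1: "finite I1" and fI2: "finite I2"
    and z: "\<And>i j. i \<in> I1 \<Longrightarrow> j \<in> I2 \<Longrightarrow> comp_weight s1 f1 f2 i j = (\<lambda>_. 0) \<Longrightarrow>
      g (prod_encode (i, j)) = 0"
  shows "(\<Sum>k\<in>comp_index I1 s1 f1 I2 f2. g k) = (\<Sum>i\<in>I1. \<Sum>j\<in>I2. g (prod_encode (i, j)))"
proof -
  have inj: "inj_on prod_encode (I1 \<times> I2)" using inj_prod_encode by (auto simp: inj_on_def)
  have "(\<Sum>k\<in>comp_index I1 s1 f1 I2 f2. g k) = (\<Sum>k\<in>prod_encode ` (I1 \<times> I2). g k)"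
  proof (rule sum.mono_neutral_left)
    show "finite (prod_encode ` (I1 \<times> I2))" using fI1 fI2 by auto
    show "comp_index I1 s1 f1 I2 f2 \<subseteq> prod_encode ` (I1 \<times> I2)" by (rule comp_index_subset)
    show "\<forall>k\<in>prod_encode ` (I1 \<times> I2) - comp_index I1 s1 f1 I2 f2. g k = 0"
      using z unfolding comp_index_def by auto
  qed
  also have "\<dots> = (\<Sum>p\<in>I1 \<times> I2. g (prod_encode p))" by (simp add: sum.reindex[OF inj])
  also have "\<dots> = (\<Sum>i\<in>I1. \<Sum>j\<in>I2. g (prod_encode (i, j)))" by (simp add: sum.cartesian_product)
  finally show ?thesis .
qed

lemma gen_prob_comp:
  assumes gp1: "gen_prob G I1 s1 f1" and fI1: "finite I1"
    and gp2: "gen_prob G I2 s2 f2" and fI2: "finite I2"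
  shows "gen_prob G (comp_index I1 s1 f1 I2 f2) (comp_group s1 s2) (comp_fun s1 f1 f2)"
proof -
  have sI1: "\<And>i. i \<in> I1 \<Longrightarrow> s1 i \<in> carrier G" and fc1: "\<And>i. i \<in> I1 \<Longrightarrow> continuous_on UNIV (f1 i)"
    and fn1: "\<And>i x. i \<in> I1 \<Longrightarrow> f1 i x \<ge> 0"
    using gp1 by (auto simp: gen_prob_def)
  have sI2: "\<And>i. i \<in> I2 \<Longrightarrow> s2 i \<in> carrier G" and fc2: "\<And>i. i \<in> I2 \<Longrightarrow> continuous_on UNIV (f2 i)"
    and fn2: "\<And>i x. i \<in> I2 \<Longrightarrow> f2 i x \<ge> 0"
    using gp2 by (auto simp: gen_prob_def)
  have weights: "comp_group s1 s2 k \<in> carrier G \<and> continuous_on UNIV (comp_fun s1 f1 f2 k)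
      \<and> (\<forall>x. comp_fun s1 f1 f2 k x \<ge> 0) \<and> comp_fun s1 f1 f2 k \<noteq> (\<lambda>_. 0)"
    if k: "k \<in> comp_index I1 s1 f1 I2 f2" for k
  proof -
    obtain i j where i: "i \<in> I1" and j: "j \<in> I2" and kk: "k = prod_encode (i, j)"
      and nz: "comp_weight s1 f1 f2 i j \<noteq> (\<lambda>_. 0)"
      using k unfolding comp_index_def by blast
    have "continuous_on UNIV (\<lambda>x. f2 j (act (inv (s1 i)) x))"
      by (rule continuous_on_compose2[OF fc2[OF j] continuous_on_act]) (use sI1[OF i] in auto)
    then have "continuous_on UNIV (comp_weight s1 f1 f2 i j)"
      unfolding comp_weight_def by (intro continuous_on_mult fc1[OF i])
    then show ?thesis using i j nz sI1 sI2 fn1 fn2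
      unfolding comp_group_def comp_fun_def kk comp_weight_def by auto
  qed
  have "((\<lambda>k. (comp_fun s1 f1 f2 k x)\<^sup>2) has_sum 1) (comp_index I1 s1 f1 I2 f2)" for x
  proof (rule has_sum_finiteI[OF finite_comp_index[OF fI1 fI2]])
    have "(\<Sum>k\<in>comp_index I1 s1 f1 I2 f2. (comp_fun s1 f1 f2 k x)\<^sup>2)
        = (\<Sum>i\<in>I1. \<Sum>j\<in>I2. (comp_fun s1 f1 f2 (prod_encode (i, j)) x)\<^sup>2)"
      by (rule sum_comp_index[OF fI1 fI2]) (simp add: comp_fun_def)
    also have "\<dots> = (\<Sum>i\<in>I1. (f1 i x)\<^sup>2 * (\<Sum>j\<in>I2. (f2 j (act (inv (s1 i)) x))\<^sup>2))"
      by (simp add: comp_fun_def comp_weight_def power_mult_distrib sum_distrib_left)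
    also have "\<dots> = 1" using gen_prob_sum_squares[OF gp2 fI2] gen_prob_sum_squares[OF gp1 fI1] by simp
    finally show "1 = (\<Sum>k\<in>comp_index I1 s1 f1 I2 f2. (comp_fun s1 f1 f2 k x)\<^sup>2)" by simp
  qed
  then show ?thesis unfolding gen_prob_def using weights by blast
qed

lemma gen_apply_comp:
  assumes gp1: "gen_prob G I1 s1 f1" and fI1: "finite I1"
    and gp2: "gen_prob G I2 s2 f2" and fI2: "finite I2"
  shows "gen_apply G act (comp_index I1 s1 f1 I2 f2) (comp_group s1 s2) (comp_fun s1 f1 f2) a
       = gen_apply G act I1 s1 f1 (gen_apply G act I2 s2 f2 a)" (is "?L = ?R")
proof (intro ext)
  fix u x
  show "?L u x = ?R u x"
  proof (cases "u \<in> carrier G")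
    case False
    then show ?thesis by (simp add: gen_apply_outside)
  next
    case u: True
    let ?T = "\<lambda>k. complex_of_real (comp_fun s1 f1 f2 k x)
        * a (inv (comp_group s1 s2 k) \<otimes> u \<otimes> comp_group s1 s2 k) (act (inv (comp_group s1 s2 k)) x)
        * complex_of_real (comp_fun s1 f1 f2 k (act (inv u) x))"
    have "?L u x = (\<Sum>i\<in>I1. \<Sum>j\<in>I2. ?T (prod_encode (i, j)))"
      unfolding gen_apply_finite[OF u finite_comp_index[OF fI1 fI2]]
      by (rule sum_comp_index[OF fI1 fI2]) (simp add: comp_fun_def)
    also have "\<dots> = ?R u x"
      unfolding gen_apply_finite[OF u fI1]
    proof (rule sum.cong[OF refl])
      fix i assume i: "i \<in> I1"
      have s1: "s1 i \<in> carrier G" by (rule gen_prob_carrier[OF gp1 i])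
      then have conj: "inv (s1 i) \<otimes> u \<otimes> s1 i \<in> carrier G" using u by simp
      show "(\<Sum>j\<in>I2. ?T (prod_encode (i, j))) =
        complex_of_real (f1 i x) * gen_apply G act I2 s2 f2 a (inv (s1 i) \<otimes> u \<otimes> s1 i) (act (inv (s1 i)) x) *
          complex_of_real (f1 i (act (inv u) x))"
        unfolding gen_apply_finite[OF conj fI2] sum_distrib_left sum_distrib_right
        using s1 gen_prob_carrier[OF gp2] u
        by (intro sum.cong refl) (simp add: comp_group_def comp_fun_def comp_weight_def conj_mult
            act_inv_mult act_inv_conj act_act_inv mult_ac)
    qed
    finally show ?thesis .
  qed
qed
subsection \<open>Mixing with the identity\<close>

text \<open>The mixture \<delta> id + (1 - \<delta>) \<mu>: index 0 carries the identity with weight sqrt \<delta>, index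
Suc i carries s_i with weight sqrt (1 - \<delta>) f_i.\<close>

definition mix_index :: "nat set \<Rightarrow> nat set"
  where "mix_index I = insert 0 (Suc ` I)"

definition mix_group :: "(nat \<Rightarrow> 'g) \<Rightarrow> nat \<Rightarrow> 'g"
  where "mix_group s k = (if k = 0 then \<one> else s (k - 1))"

definition mix_fun :: "real \<Rightarrow> (nat \<Rightarrow> 'x \<Rightarrow> real) \<Rightarrow> nat \<Rightarrow> 'x \<Rightarrow> real"
  where "mix_fun \<delta> f k = (if k = 0 then (\<lambda>_. sqrt \<delta>) else (\<lambda>x. sqrt (1 - \<delta>) * f (k - 1) x))"

lemma sum_mix_index: "finite I \<Longrightarrow> (\<Sum>k\<in>mix_index I. g k) = g 0 + (\<Sum>i\<in>I. g (Suc i))"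
  unfolding mix_index_def by (simp add: sum.reindex)

lemma gen_prob_mix:
  assumes gp: "gen_prob G I s f" and fI: "finite I" and d: "0 < \<delta>" "\<delta> < 1"
  shows "gen_prob G (mix_index I) (mix_group s) (mix_fun \<delta> f)"
proof -
  have sI: "\<And>i. i \<in> I \<Longrightarrow> s i \<in> carrier G" and f_cont: "\<And>i. i \<in> I \<Longrightarrow> continuous_on UNIV (f i)"
    and f_nonneg: "\<And>i x. i \<in> I \<Longrightarrow> f i x \<ge> 0" and f_nonzero: "\<And>i. i \<in> I \<Longrightarrow> f i \<noteq> (\<lambda>_. 0)"
    using gp by (auto simp: gen_prob_def)
  have weights: "mix_group s k \<in> carrier G \<and> continuous_on UNIV (mix_fun \<delta> f k)
      \<and> (\<forall>x. mix_fun \<delta> f k x \<ge> 0) \<and> mix_fun \<delta> f k \<noteq> (\<lambda>_. 0)"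
    if k: "k \<in> mix_index I" for k
  proof (cases "k = 0")
    case True then show ?thesis using d by (auto simp: mix_group_def mix_fun_def fun_eq_iff)
  next
    case False
    then obtain i where i: "i \<in> I" and kk: "k = Suc i" using k by (auto simp: mix_index_def)
    obtain y where "f i y \<noteq> 0" using f_nonzero[OF i] by (auto simp: fun_eq_iff)
    then have "mix_fun \<delta> f k \<noteq> (\<lambda>_. 0)" using d by (auto simp: mix_fun_def kk fun_eq_iff)
    moreover have "continuous_on UNIV (mix_fun \<delta> f k)" unfolding mix_fun_def kk
      by (simp add: continuous_on_mult continuous_on_const f_cont[OF i])
    ultimately show ?thesis using sI[OF i] f_nonneg[OF i] d by (auto simp: mix_group_def mix_fun_def kk)
  qed
  have "((\<lambda>k. (mix_fun \<delta> f k x)\<^sup>2) has_sum 1) (mix_index I)" for x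
  proof (rule has_sum_finiteI)
    show "finite (mix_index I)" using fI by (simp add: mix_index_def)
    have "(\<Sum>k\<in>mix_index I. (mix_fun \<delta> f k x)\<^sup>2) = \<delta> + (\<Sum>i\<in>I. (1 - \<delta>) * (f i x)\<^sup>2)"
      using d by (simp add: sum_mix_index[OF fI] mix_fun_def power_mult_distrib)
    also have "\<dots> = 1" using gen_prob_sum_squares[OF gp fI] by (simp add: sum_distrib_left[symmetric])
    finally show "1 = (\<Sum>k\<in>mix_index I. (mix_fun \<delta> f k x)\<^sup>2)" by simp
  qed
  then show ?thesis unfolding gen_prob_def using weights by blast
qed

lemma gen_apply_mix:
  assumes fI: "finite I" and d: "0 < \<delta>" "\<delta> < 1" and out: "\<And>u. u \<notin> carrier G \<Longrightarrow> a u = (\<lambda>_. 0)"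
  shows "gen_apply G act (mix_index I) (mix_group s) (mix_fun \<delta> f) a
    = (\<lambda>u y. complex_of_real (1 - \<delta>) * gen_apply G act I s f a u y + complex_of_real \<delta> * a u y)"
    (is "?L = ?R")
proof (intro ext)
  fix u y
  show "?L u y = ?R u y"
  proof (cases "u \<in> carrier G")
    case False
    then show ?thesis using out[OF False] by (simp add: gen_apply_outside)
  next
    case u: True
    let ?T = "\<lambda>s f k. complex_of_real (f k y) * a (inv (s k) \<otimes> u \<otimes> s k) (act (inv (s k)) y)
      * complex_of_real (f k (act (inv u) y))"
    have zero: "?T (mix_group s) (mix_fun \<delta> f) 0 = complex_of_real \<delta> * a u y"
      using u d by (simp add: mix_group_def mix_fun_def act_one mult_ac flip: of_real_mult)
    have sqrt_sq: "complex_of_real (sqrt (1 - \<delta>)) * complex_of_real (sqrt (1 - \<delta>)) = complex_of_real (1 - \<delta>)"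
      using d by (simp flip: of_real_mult)
    have suc: "?T (mix_group s) (mix_fun \<delta> f) (Suc i) = complex_of_real (1 - \<delta>) * ?T s f i" for i
      unfolding sqrt_sq[symmetric] by (simp add: mix_group_def mix_fun_def mult_ac)
    have "finite (mix_index I)" using fI by (simp add: mix_index_def)
    then show ?thesis
      unfolding gen_apply_finite[OF u \<open>finite (mix_index I)\<close>] gen_apply_finite[OF u fI] sum_mix_index[OF fI]
        zero suc sum_distrib_left[symmetric]
      by simp
  qed
qed

subsection \<open>Making finitely many elements small\<close>

lemma finite_bounded_mixtures:
  assumes "\<not> cp_bounded a"
  shows "finite {\<delta>. cp_bounded (\<lambda>u y. complex_of_real (1 - \<delta>) * m u y + complex_of_real \<delta> * a u y)}"
    (is "finite ?D")
proof -
  have unique: "\<delta>1 = \<delta>2" if "\<delta>1 \<in> ?D" "\<delta>2 \<in> ?D" for \<delta>1 \<delta>2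
  proof (rule ccontr)
    assume ne: "\<delta>1 \<noteq> \<delta>2"
    from that have b1: "cp_bounded (\<lambda>u y. complex_of_real (1 - \<delta>1) * m u y + complex_of_real \<delta>1 * a u y)"
      and b2: "cp_bounded (\<lambda>u y. complex_of_real (1 - \<delta>2) * m u y + complex_of_real \<delta>2 * a u y)"
      by blast+
    from ne have "complex_of_real \<delta>1 \<noteq> complex_of_real \<delta>2" by simp
    then have eq: "a = (\<lambda>u y. (1 - complex_of_real \<delta>2) / (complex_of_real \<delta>1 - complex_of_real \<delta>2)
        * (complex_of_real (1 - \<delta>1) * m u y + complex_of_real \<delta>1 * a u y)
      + (complex_of_real \<delta>1 - 1) / (complex_of_real \<delta>1 - complex_of_real \<delta>2)
        * (complex_of_real (1 - \<delta>2) * m u y + complex_of_real \<delta>2 * a u y))"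
      by (intro ext, simp only: of_real_diff of_real_1, rule eq_lincomb_of_mixtures)
    have "cp_bounded a"
      unfolding arg_cong[where f = cp_bounded, OF eq] by (rule cp_bounded_lincomb[OF b1 b2])
    with assms show False ..
  qed
  show ?thesis
  proof (cases "?D = {}")
    case False
    then obtain d where "d \<in> ?D" by blast
    with unique have "?D \<subseteq> {d}" by blast
    then show ?thesis by (rule finite_subset) simp
  qed simp
qed

lemma exists_unbounded_mixtures:
  assumes "finite U" and "\<forall>a\<in>U. \<not> cp_bounded a" and "0 < d"
  shows "\<exists>\<delta>. 0 < \<delta> \<and> \<delta> < d \<and>
    (\<forall>a\<in>U. \<not> cp_bounded (\<lambda>u y. complex_of_real (1 - \<delta>) * m a u y + complex_of_real \<delta> * a u y))"
proof -
  let ?D = "\<Union>a\<in>U. {\<delta>. cp_bounded (\<lambda>u y. complex_of_real (1 - \<delta>) * m a u y + complex_of_real \<delta> * a u y)}"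
  have "finite ?D" using assms(1,2) finite_bounded_mixtures by blast
  then have "infinite ({0<..<d} - ?D)" using Diff_infinite_finite assms(3) by simp
  then obtain \<delta> where "\<delta> \<in> {0<..<d} - ?D" using infinite_imp_nonempty by blast
  then show ?thesis by auto
qed

lemma exists_gen_prob_norm_bound:
  assumes cpt: "compact (UNIV :: 'x set)"
    and hyp: "\<forall>a\<in>crossed_product G act. cp_E G a = (\<lambda>_ _. 0) \<longrightarrow>
               (\<forall>e>0. \<exists>(I::nat set) s f. gen_prob_fin G I s f \<and> cp_norm G act (gen_apply G act I s f a) < e)"
    and "finite A" and "\<forall>a\<in>A. a \<in> crossed_product G act \<and> cp_E G a = (\<lambda>_ _. 0)" and "0 < e"
  shows "\<exists>(I::nat set) s f. gen_prob G I s f \<and> finite I \<and>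
           (\<forall>a\<in>A. cp_bounded a \<longrightarrow> norm_bound (gen_apply G act I s f a) e)"
  using assms(3,4)
proof (induction A rule: finite_induct)
  case empty
  have "gen_prob G {0::nat} (\<lambda>_. \<one>) (\<lambda>_ _. 1)"
    unfolding gen_prob_def by (auto intro!: has_sum_finiteI simp: fun_eq_iff)
  then show ?case by fastforce
next
  case (insert a A)
  then obtain I :: "nat set" and s f where gp: "gen_prob G I s f" and fI: "finite I"
    and small: "\<forall>a\<in>A. cp_bounded a \<longrightarrow> norm_bound (gen_apply G act I s f a) e" by auto
  show ?case
  proof (cases "cp_bounded a")
    case False
    then show ?thesis using gp fI small by blast
  next
    case True
    let ?b = "gen_apply G act I s f a"
    have a: "a \<in> crossed_product G act" "cp_E G a = (\<lambda>_ _. 0)" using insert.prems by auto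
    have "?b \<in> crossed_product G act" by (rule gen_apply_crossed_product[OF cpt gp fI a(1) True])
    moreover have "cp_E G ?b = (\<lambda>_ _. 0)" by (rule cp_E_gen_apply[OF a(2) gp])
    ultimately obtain I' :: "nat set" and s' f' where gp': "gen_prob G I' s' f'" and fI': "finite I'"
      and lt: "cp_norm G act (gen_apply G act I' s' f' ?b) < e"
      using hyp \<open>0 < e\<close> unfolding gen_prob_fin_def by blast
    have "cp_bounded (gen_apply G act I' s' f' ?b)"
      using cp_bounded_gen_apply gp gp' fI fI' True by blast
    then have new: "norm_bound (gen_apply G act I' s' f' ?b) e"
      using norm_bound_mono[OF norm_bound_cp_norm] lt by simp
    have "\<forall>c\<in>insert a A. cp_bounded c \<longrightarrow> norm_bound (gen_apply G act I' s' f' (gen_apply G act I s f c)) e"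
      using new small norm_bound_gen_apply[OF gp' fI'] by auto
    then show ?thesis
      unfolding gen_apply_comp[OF gp' fI' gp fI, symmetric]
      using gen_prob_comp[OF gp' fI' gp fI] finite_comp_index[OF fI' fI] by blast
  qed
qed

lemma norm_bound_uniform:
  assumes "finite A" and "\<forall>a\<in>A. cp_bounded a"
  shows "\<exists>M\<ge>0. \<forall>a\<in>A. norm_bound a M"
  using assms
proof (induction A rule: finite_induct)
  case empty
  show ?case by blast
next
  case (insert a A)
  then obtain M where M: "M \<ge> 0" "\<forall>c\<in>A. norm_bound c M" by blast
  obtain B where B: "norm_bound a B" using insert.prems cp_bounded_def by blast
  have "norm_bound c (max M B)" if "c \<in> insert a A" for c
  proof (cases "c = a")
    case True
    then show ?thesis using norm_bound_mono[OF B] by simp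
  next
    case False
    then show ?thesis using that M norm_bound_mono[of c M] by simp
  qed
  then show ?case using M(1) by (intro exI[of _ "max M B"]) simp
qed

lemma cp_norm_mixture_less:
  assumes "norm_bound m (e / 2)" and "norm_bound a M" and "0 < \<delta>" "\<delta> < 1" "\<delta> * M < e / 2"
  shows "cp_norm G act (\<lambda>u y. complex_of_real (1 - \<delta>) * m u y + complex_of_real \<delta> * a u y) < e"
proof -
  have "norm_bound (\<lambda>u y. complex_of_real (1 - \<delta>) * m u y + complex_of_real \<delta> * a u y)
          ((1 - \<delta>) * (e / 2) + \<delta> * M)"
    using norm_bound_lincomb[OF assms(1,2), of "complex_of_real (1 - \<delta>)" "complex_of_real \<delta>"] assms(3,4)
    by (simp only: norm_of_real abs_of_pos diff_gt_0_iff_gt)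
  then have "cp_norm G act (\<lambda>u y. complex_of_real (1 - \<delta>) * m u y + complex_of_real \<delta> * a u y)
      \<le> (1 - \<delta>) * (e / 2) + \<delta> * M"
    by (rule cp_norm_le)
  moreover have "(1 - \<delta>) * (e / 2) \<le> e / 2"
    using norm_bound_nonneg[OF assms(1)] assms(3,4) by (simp add: mult_left_le_one_le)
  ultimately show ?thesis using assms(5) by linarith
qed

lemma cp_norm_mixture_less_crossed_product:
  assumes cpt: "compact (UNIV :: 'x set)" and a: "a \<in> crossed_product G act" and "0 < e"
    and "0 < \<delta>" "\<delta> < 1" "\<delta> * M < e / 2"
    and bounded: "cp_bounded a \<Longrightarrow> norm_bound m (e / 2) \<and> norm_bound a M"
    and unbounded: "\<not> cp_bounded a \<Longrightarrow>
      \<not> cp_bounded (\<lambda>u y. complex_of_real (1 - \<delta>) * m u y + complex_of_real \<delta> * a u y)"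
  shows "cp_norm G act (\<lambda>u y. complex_of_real (1 - \<delta>) * m u y + complex_of_real \<delta> * a u y) < e"
proof (cases "cp_bounded a")
  case True
  then show ?thesis using bounded assms(4-6) by (intro cp_norm_mixture_less) auto
next
  case False
  then have "Sup (UNIV :: real set) = 0" using cp_bounded_crossed_product[OF cpt _ a] by blast
  then show ?thesis using unbounded[OF False] \<open>0 < e\<close> cp_norm_not_cp_bounded by simp
qed

lemma exists_gen_prob_small:
  fixes as :: "nat \<Rightarrow> 'g \<Rightarrow> 'x \<Rightarrow> complex" and n :: nat and \<epsilon> :: real
  assumes cpt: "compact (UNIV :: 'x set)"
    and hyp: "\<forall>a\<in>crossed_product G act. cp_E G a = (\<lambda>_ _. 0) \<longrightarrow>
               (\<forall>e>0. \<exists>(I::nat set) s f. gen_prob_fin G I s f \<and> cp_norm G act (gen_apply G act I s f a) < e)"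
    and as_in: "\<forall>i\<in>{1..n}. as i \<in> crossed_product G act \<and> cp_E G (as i) = (\<lambda>_ _. 0)"
    and eps: "\<epsilon> > 0"
  shows "\<exists>(I::nat set) s f. gen_prob G I s f \<and>
           (\<forall>i\<in>{1..n}. cp_norm G act (gen_apply G act I s f (as i)) < \<epsilon>)"
proof -
  let ?A = "as ` {1..n}"
  let ?B = "{a\<in>?A. cp_bounded a}" and ?U = "{a\<in>?A. \<not> cp_bounded a}"
  have "\<forall>a\<in>?A. a \<in> crossed_product G act \<and> cp_E G a = (\<lambda>_ _. 0)" using as_in by blast
  moreover have "0 < \<epsilon> / 2" using eps by simp
  ultimately obtain I :: "nat set" and s f where gp: "gen_prob G I s f" and fI: "finite I"
    and small: "\<forall>a\<in>?A. cp_bounded a \<longrightarrow> norm_bound (gen_apply G act I s f a) (\<epsilon> / 2)"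
    using exists_gen_prob_norm_bound[OF cpt hyp, of ?A] by blast
  have "finite ?B" "\<forall>a\<in>?B. cp_bounded a" by simp_all
  then obtain M where "M \<ge> 0" and M: "\<forall>a\<in>?B. norm_bound a M"
    using norm_bound_uniform by blast
  have "finite ?U" "\<forall>a\<in>?U. \<not> cp_bounded a" "0 < min 1 (\<epsilon> / (2 * (M + 1)))"
    using eps \<open>M \<ge> 0\<close> by simp_all
  then obtain \<delta> where \<delta>: "0 < \<delta>" "\<delta> < min 1 (\<epsilon> / (2 * (M + 1)))"
    and unbounded: "\<forall>a\<in>?U. \<not> cp_bounded
      (\<lambda>u y. complex_of_real (1 - \<delta>) * gen_apply G act I s f a u y + complex_of_real \<delta> * a u y)"
    using exists_unbounded_mixtures by blast
  have "\<delta> * M < \<epsilon> / 2"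
  proof -
    have "\<delta> * M \<le> \<delta> * (M + 1)" using \<delta> by simp
    also have "\<dots> < \<epsilon> / 2" using \<delta> \<open>M \<ge> 0\<close> by (simp add: less_divide_eq algebra_simps)
    finally show ?thesis .
  qed
  have "cp_norm G act (gen_apply G act (mix_index I) (mix_group s) (mix_fun \<delta> f) (as i)) < \<epsilon>"
    if i: "i \<in> {1..n}" for i
  proof -
    have a: "as i \<in> crossed_product G act" using as_in i by blast
    then have "gen_apply G act (mix_index I) (mix_group s) (mix_fun \<delta> f) (as i)
        = (\<lambda>u y. complex_of_real (1 - \<delta>) * gen_apply G act I s f (as i) u y + complex_of_real \<delta> * as i u y)"
      using fI \<delta> by (intro gen_apply_mix) (auto simp: crossed_product_def)
    moreover have "cp_norm G act (\<lambda>u y. complex_of_real (1 - \<delta>) * gen_apply G act I s f (as i) u y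
        + complex_of_real \<delta> * as i u y) < \<epsilon>"
      using i small M unbounded \<delta> \<open>\<delta> * M < \<epsilon> / 2\<close>
      by (intro cp_norm_mixture_less_crossed_product[OF cpt a eps]) auto
    ultimately show ?thesis by simp
  qed
  moreover have "gen_prob G (mix_index I) (mix_group s) (mix_fun \<delta> f)"
    using gen_prob_mix[OF gp fI] \<delta> by simp
  ultimately show ?thesis by blast
qed

end

theorem mainTheorem15:
  fixes G :: "'g monoid" and act :: "'g \<Rightarrow> 'x::t2_space \<Rightarrow> 'x"
    and as :: "nat \<Rightarrow> 'g \<Rightarrow> 'x \<Rightarrow> complex" and n :: nat and \<epsilon> :: real
  assumes grp: "group G" and cnt: "countable (carrier G)"
    and cpt: "compact (UNIV :: 'x set)"
    and act_one: "act \<one>\<^bsub>G\<^esub> = id"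
    and act_mult: "\<forall>s\<in>carrier G. \<forall>t\<in>carrier G. act (s \<otimes>\<^bsub>G\<^esub> t) = act s \<circ> act t"
    and act_homeo: "\<forall>s\<in>carrier G. homeomorphism UNIV UNIV (act s) (act (inv\<^bsub>G\<^esub> s))"
    and hyp: "\<forall>a\<in>crossed_product G act. cp_E G a = (\<lambda>_ _. 0) \<longrightarrow>
               (\<forall>e>0. \<exists>(I::nat set) s f. gen_prob_fin G I s f \<and> cp_norm G act (gen_apply G act I s f a) < e)"
    and as_in: "\<forall>i\<in>{1..n}. as i \<in> crossed_product G act \<and> cp_E G (as i) = (\<lambda>_ _. 0)"
    and eps: "\<epsilon> > 0"
  shows "\<exists>(I::nat set) s f. gen_prob G I s f \<and>
           (\<forall>i\<in>{1..n}. cp_norm G act (gen_apply G act I s f (as i)) < \<epsilon>)"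
proof -
  interpret homeomorphic_action G act
    by (intro homeomorphic_action.intro homeomorphic_action_axioms.intro grp act_one act_mult act_homeo)
  show ?thesis by (rule exists_gen_prob_small[OF cpt hyp as_in eps])
qed

end
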